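(* Let $\Gamma=(V,E,\mathbf I)$ be a connected locally finite graph with $E\ne\emptyset$ and let $G\le\mathrm{Aut}\,\Gamma$ be such that $\Gamma$ is $G$-vertex-rotary, of valency $k$ and edge-multiplicity $\lambda$. Let $\alpha,\beta$ be adjacent vertices, $e$ an edge incident with both, $H=G_\alpha$, $J=G_e$. Then (a) $\Gamma\cong\mathrm{Cos}(G,H,J)$, and $G=\langle a,z\rangle$ where $H=\langle a\rangle\cong\mathbb Z_{k\lambda}$, $H\cap H^z=\langle a^k\rangle\cong\mathbb Z_\lambda$, $J=\langle z\rangle\cong\mathbb Z_2$ and $H\cap J=1$; (b) $z\notin\langle a\rangle$, $z^a\notin\langle a\rangle$, $(a,z)$ is a rotary pair for $G$, and $G$ acts regularly on the set of arcs of $\Gamma$.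
   Context: Graphs are triples $(V,E,\mathbf I)$, each edge incident with exactly two distinct vertices, multiple edges allowed. $\Gamma$ is $G$-vertex-rotary if $G$ is arc-transitive on $\Gamma$ and the stabiliser $G_\alpha$ of a vertex $\alpha$ induces a transitive cyclic group on the set $E(\alpha)$ of edges incident with $\alpha$. A rotary pair for a group $G$ is an ordered pair $(a,z)$ of elements with $G=\langle a,z\rangle$, $|a|$ finite, $|z|=2$ and $z\notin\langle a\rangle$. $\mathrm{Cos}(G,H,J)$: vertices $\{Hx\}$, edges $\{Jy\}$, $Hx$ incident with $Jy$ iff $yx^{-1}\in JH$. *)

theory Defs
  imports "HOL-Algebra.Algebra"
begin

definition graph :: "'v set \<Rightarrow> 'e set \<Rightarrow> ('v \<times> 'e) set \<Rightarrow> bool" where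
  "graph V E I \<longleftrightarrow> I \<subseteq> V \<times> E \<and> (\<forall>e\<in>E. card {v. (v, e) \<in> I} = 2)"

definition edges_at :: "('v \<times> 'e) set \<Rightarrow> 'v \<Rightarrow> 'e set" where
  "edges_at I v = {e. (v, e) \<in> I}"

definition adjacent :: "('v \<times> 'e) set \<Rightarrow> 'v \<Rightarrow> 'v \<Rightarrow> bool" where
  "adjacent I u v \<longleftrightarrow> u \<noteq> v \<and> (\<exists>e. (u, e) \<in> I \<and> (v, e) \<in> I)"

definition connected_graph :: "'v set \<Rightarrow> ('v \<times> 'e) set \<Rightarrow> bool" where
  "connected_graph V I \<longleftrightarrow>
     (\<forall>u\<in>V. \<forall>v\<in>V. (u, v) \<in> {(x, y). adjacent I x y}\<^sup>*)"

definition locally_finite :: "'v set \<Rightarrow> ('v \<times> 'e) set \<Rightarrow> bool" where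
  "locally_finite V I \<longleftrightarrow> (\<forall>v\<in>V. finite (edges_at I v))"

definition neighbours :: "'v set \<Rightarrow> ('v \<times> 'e) set \<Rightarrow> 'v \<Rightarrow> 'v set" where
  "neighbours V I v = {u\<in>V. adjacent I v u}"

definition edges_between :: "('v \<times> 'e) set \<Rightarrow> 'v \<Rightarrow> 'v \<Rightarrow> 'e set" where
  "edges_between I u v = {e. (u, e) \<in> I \<and> (v, e) \<in> I}"

text \<open>Arcs of a graph with multiple edges: incident vertex-edge pairs (alpha, e).\<close>
definition arcs :: "('v \<times> 'e) set \<Rightarrow> ('v \<times> 'e) set" where
  "arcs I = I"

definition auts :: "'v set \<Rightarrow> 'e set \<Rightarrow> ('v \<times> 'e) set \<Rightarrow> (('v \<Rightarrow> 'v) \<times> ('e \<Rightarrow> 'e)) set" where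
  "auts V E I = {(f, g). bij_betw f V V \<and> bij_betw g E E \<and>
       (\<forall>x. x \<notin> V \<longrightarrow> f x = x) \<and> (\<forall>x. x \<notin> E \<longrightarrow> g x = x) \<and>
       (\<forall>v\<in>V. \<forall>e\<in>E. (v, e) \<in> I \<longleftrightarrow> (f v, g e) \<in> I)}"

definition Aut_group :: "'v set \<Rightarrow> 'e set \<Rightarrow> ('v \<times> 'e) set \<Rightarrow> (('v \<Rightarrow> 'v) \<times> ('e \<Rightarrow> 'e)) monoid" where
  "Aut_group V E I = \<lparr>carrier = auts V E I,
      monoid.mult = (\<lambda>(f, g) (f', g'). (f \<circ> f', g \<circ> g')), one = (id, id)\<rparr>"

definition arc_act :: "('v \<Rightarrow> 'v) \<times> ('e \<Rightarrow> 'e) \<Rightarrow> 'v \<times> 'e \<Rightarrow> 'v \<times> 'e" where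
  "arc_act g d = (fst g (fst d), snd g (snd d))"

definition vstab :: "(('v \<Rightarrow> 'v) \<times> ('e \<Rightarrow> 'e)) set \<Rightarrow> 'v \<Rightarrow> (('v \<Rightarrow> 'v) \<times> ('e \<Rightarrow> 'e)) set" where
  "vstab G v = {g\<in>G. fst g v = v}"

definition estab :: "(('v \<Rightarrow> 'v) \<times> ('e \<Rightarrow> 'e)) set \<Rightarrow> 'e \<Rightarrow> (('v \<Rightarrow> 'v) \<times> ('e \<Rightarrow> 'e)) set" where
  "estab G e = {g\<in>G. snd g e = e}"

definition arc_transitive :: "('v \<times> 'e) set \<Rightarrow> (('v \<Rightarrow> 'v) \<times> ('e \<Rightarrow> 'e)) set \<Rightarrow> bool" where
  "arc_transitive I G \<longleftrightarrow> (\<forall>d\<in>arcs I. \<forall>d'\<in>arcs I. \<exists>g\<in>G. arc_act g d = d')"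

definition arc_regular :: "('v \<times> 'e) set \<Rightarrow> (('v \<Rightarrow> 'v) \<times> ('e \<Rightarrow> 'e)) set \<Rightarrow> bool" where
  "arc_regular I G \<longleftrightarrow> (\<forall>d\<in>arcs I. \<forall>d'\<in>arcs I. \<exists>!g. g \<in> G \<and> arc_act g d = d')"

text \<open>G-vertex-rotary: G is arc-transitive and, for each vertex alpha, the group of
  permutations of E(alpha) induced by G_alpha is cyclic (generated by the permutation
  induced by some c in G_alpha) and transitive on E(alpha).\<close>
definition vertex_rotary :: "'v set \<Rightarrow> 'e set \<Rightarrow> ('v \<times> 'e) set \<Rightarrow> (('v \<Rightarrow> 'v) \<times> ('e \<Rightarrow> 'e)) set \<Rightarrow> bool" where
  "vertex_rotary V E I G \<longleftrightarrow> arc_transitive I G \<and>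
     (\<forall>\<alpha>\<in>V.
        (\<exists>c\<in>vstab G \<alpha>. \<forall>g\<in>vstab G \<alpha>. \<exists>n::int. \<forall>e\<in>edges_at I \<alpha>.
             snd g e = snd (c [^]\<^bsub>Aut_group V E I\<^esub> n) e) \<and>
        (\<forall>e\<in>edges_at I \<alpha>. \<forall>e'\<in>edges_at I \<alpha>. \<exists>g\<in>vstab G \<alpha>. snd g e = e'))"

definition graph_isomorphic ::
  "'v set \<Rightarrow> 'e set \<Rightarrow> ('v \<times> 'e) set \<Rightarrow> 'w set \<Rightarrow> 'f set \<Rightarrow> ('w \<times> 'f) set \<Rightarrow> bool" where
  "graph_isomorphic V E I V' E' I' \<longleftrightarrow> (\<exists>\<phi> \<psi>. bij_betw \<phi> V V' \<and> bij_betw \<psi> E E' \<and>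
      (\<forall>v\<in>V. \<forall>e\<in>E. (v, e) \<in> I \<longleftrightarrow> (\<phi> v, \<psi> e) \<in> I'))"

definition cos_V :: "('a, 'b) monoid_scheme \<Rightarrow> 'a set \<Rightarrow> 'a set set" where
  "cos_V G H = rcosets\<^bsub>G\<^esub> H"

definition cos_E :: "('a, 'b) monoid_scheme \<Rightarrow> 'a set \<Rightarrow> 'a set set" where
  "cos_E G J = rcosets\<^bsub>G\<^esub> J"

definition cos_I :: "('a, 'b) monoid_scheme \<Rightarrow> 'a set \<Rightarrow> 'a set \<Rightarrow> ('a set \<times> 'a set) set" where
  "cos_I G H J = {(H #>\<^bsub>G\<^esub> x, J #>\<^bsub>G\<^esub> y) | x y. x \<in> carrier G \<and> y \<in> carrier G \<and>
        y \<otimes>\<^bsub>G\<^esub> inv\<^bsub>G\<^esub> x \<in> J <#>\<^bsub>G\<^esub> H}"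

definition conj_set :: "('a, 'b) monoid_scheme \<Rightarrow> 'a set \<Rightarrow> 'a \<Rightarrow> 'a set" where
  "conj_set G H z = {inv\<^bsub>G\<^esub> z \<otimes>\<^bsub>G\<^esub> h \<otimes>\<^bsub>G\<^esub> z | h. h \<in> H}"

definition rotary_pair :: "('a, 'b) monoid_scheme \<Rightarrow> 'a \<Rightarrow> 'a \<Rightarrow> bool" where
  "rotary_pair G a z \<longleftrightarrow> a \<in> carrier G \<and> z \<in> carrier G \<and>
     generate G {a, z} = carrier G \<and> group.ord G a \<noteq> 0 \<and> group.ord G z = 2 \<and>
     z \<notin> generate G {a}"

end

theory Submission
  imports Defs
begin

text \<open>
  The stabiliser H of \<alpha> induces a cyclic, hence abelian, transitive group on the edges at \<alpha>,
  and such a group acts regularly; by connectivity an automorphism fixing one arc fixes everything,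
  so G acts regularly on arcs. Consequently H is isomorphic to the cyclic group it induces on the
  k\<lambda> edges at \<alpha>, the edge stabiliser J is generated by the element z reversing the arc (\<alpha>, e),
  and H \<inter> H^z, the stabiliser of \<beta> in H, is the subgroup of order \<lambda> of H = \<langle>a\<rangle>,
  namely \<langle>a^k\<rangle>. The orbit of \<alpha> under \<langle>a, z\<rangle> is closed under adjacency, so \<langle>a, z\<rangle> = G.
  Sending a vertex v to the coset {g. g v = \<alpha>} of H, and an edge to the corresponding coset of J,
  turns incidence of v and e' into the condition y x\<inverse> \<in> J H on representatives.
\<close>

section \<open>Cyclic groups\<close>

lemma (in group) generate_singleton_iso_integer_mod_group:
  assumes a: "a \<in> carrier G" and ord: "ord a \<noteq> 0"
  shows "G\<lparr>carrier := generate G {a}\<rparr> \<cong> integer_mod_group (ord a)"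
proof -
  define f where "f = (\<lambda>i::int. a [^] i)"
  have carrier_mod: "carrier (integer_mod_group (ord a)) = {0..<int (ord a)}"
    using ord by (simp add: carrier_integer_mod_group)
  have f_mod: "f (i mod int (ord a)) = f i" for i
    unfolding f_def using int_pow_eq[OF a] by (simp add: mod_eq_dvd_iff)
  have "f ` {0..<int (ord a)} = generate G {a}"
  proof -
    have "f ` {0..<int (ord a)} = range f"
      using f_mod ord by (auto intro!: image_eqI[where x = "_ mod int (ord a)"])
    then show ?thesis by (simp add: generate_pow[OF a] f_def full_SetCompr_eq)
  qed
  moreover have "inj_on f {0..<int (ord a)}"
    by (rule inj_onI) (auto simp: f_def int_pow_eq[OF a] mod_eq_dvd_iff[symmetric] mod_pos_pos_trivial)
  moreover have "f \<in> hom (integer_mod_group (ord a)) (G\<lparr>carrier := generate G {a}\<rparr>)"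
  proof (rule homI)
    fix i j assume "i \<in> carrier (integer_mod_group (ord a))" "j \<in> carrier (integer_mod_group (ord a))"
    have "f ((i + j) mod int (ord a)) = f i \<otimes> f j"
      unfolding f_mod by (simp add: f_def a int_pow_mult)
    then show "f (i \<otimes>\<^bsub>integer_mod_group (ord a)\<^esub> j) = f i \<otimes>\<^bsub>G\<lparr>carrier := generate G {a}\<rparr>\<^esub> f j"
      by simp
  qed (use \<open>f ` {0..<int (ord a)} = generate G {a}\<close> carrier_mod in auto)
  ultimately have "f \<in> iso (integer_mod_group (ord a)) (G\<lparr>carrier := generate G {a}\<rparr>)"
    unfolding iso_def bij_betw_def carrier_mod by simp
  then show ?thesis
    using is_isoI group.iso_sym[OF group_integer_mod_group] by blast
qed

lemma (in group) subgroup_of_cyclic_eq_generate_pow: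
  assumes a: "a \<in> carrier G" and ord: "ord a = k * m" and "k > 0" "m > 0"
    and L: "subgroup L G" "L \<subseteq> generate G {a}" "card L = m"
  shows "L = generate G {a [^] k}"
proof -
  have ak: "a [^] k \<in> carrier G" using a by simp
  have "L \<subseteq> generate G {a [^] k}"
  proof
    fix x assume x: "x \<in> L"
    then obtain t :: int where t: "x = a [^] t" using L(2) generate_pow[OF a] by auto
    interpret L: group "G\<lparr>carrier := L\<rparr>" using subgroup.subgroup_is_group[OF L(1) is_group] .
    have "x [^] m = \<one>"
      using L.pow_order_eq_1 x L(3) nat_pow_consistent[of x m L] by (simp add: order_def)
    moreover have "a [^] (t * int m) = x [^] m"
      using a by (simp add: t int_pow_pow flip: int_pow_int)
    ultimately have "a [^] (t * int m) = \<one>" by simp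
    then have "int k * int m dvd t * int m" using int_pow_eq_id[OF a] ord by simp
    then obtain s where "t = int k * s" using \<open>m > 0\<close> by (auto elim: dvdE)
    then have "x = (a [^] k) [^] s" using a by (simp add: t int_pow_pow flip: int_pow_int)
    then show "x \<in> generate G {a [^] k}" using generate_pow[OF ak] by auto
  qed
  moreover have "card (generate G {a [^] k}) = m"
    using ord_pow_gen[OF a, of k] ord \<open>k > 0\<close> generate_pow_card[OF ak] by simp
  ultimately show ?thesis
    using \<open>m > 0\<close> by (metis card_gt_0_iff card_subset_eq L(3))
qed

lemma (in group) conj_notin_subgroup:
  assumes H: "subgroup H G" and a: "a \<in> H" and z: "z \<in> carrier G" "z \<notin> H"
  shows "inv a \<otimes> z \<otimes> a \<notin> H"
proof
  assume c: "inv a \<otimes> z \<otimes> a \<in> H"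
  have "a \<in> carrier G" using subgroup.mem_carrier[OF H a] .
  then have "z = a \<otimes> (inv a \<otimes> z \<otimes> a) \<otimes> inv a"
    using z(1) by (simp add: m_assoc flip: m_assoc[of a "inv a"])
  also have "\<dots> \<in> H"
    using subgroup.m_closed[OF H subgroup.m_closed[OF H a c] subgroup.m_inv_closed[OF H a]] .
  finally show False using z(2) by contradiction
qed

section \<open>Group actions\<close>

locale left_action = group G for G (structure) +
  fixes act :: "'a \<Rightarrow> 'x \<Rightarrow> 'x"
  assumes act_mult: "g \<in> carrier G \<Longrightarrow> h \<in> carrier G \<Longrightarrow> act (g \<otimes> h) x = act g (act h x)"
    and act_one: "act \<one> x = x"
begin

lemma act_inv_act [simp]: "g \<in> carrier G \<Longrightarrow> act (inv g) (act g x) = x"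
  by (metis act_mult act_one inv_closed l_inv)

lemma act_act_inv [simp]: "g \<in> carrier G \<Longrightarrow> act g (act (inv g) x) = x"
  by (metis act_mult act_one inv_closed r_inv)

lemma act_inj: "g \<in> carrier G \<Longrightarrow> act g x = act g y \<Longrightarrow> x = y"
  by (metis act_inv_act)

lemma stabiliser_subgroup: "subgroup {g \<in> carrier G. act g x = x} G"
  by (rule subgroupI) (auto simp: act_mult act_one dest: act_inv_act[of _ x])

lemma transporter_eq_rcos:
  assumes g: "g \<in> carrier G" and "act g x = x0"
  shows "{h \<in> carrier G. act h x = x0} = {s \<in> carrier G. act s x0 = x0} #> g"
proof (intro equalityI subsetI)
  fix h assume h: "h \<in> {h \<in> carrier G. act h x = x0}"
  then have "h \<otimes> inv g \<in> {s \<in> carrier G. act s x0 = x0}"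
    using g assms(2) by (auto simp: act_mult dest: act_inv_act[of g x])
  moreover have "h = h \<otimes> inv g \<otimes> g" using g h by (simp add: m_assoc)
  ultimately show "h \<in> {s \<in> carrier G. act s x0 = x0} #> g"
    unfolding r_coset_def by blast
qed (use g assms(2) in \<open>auto simp: r_coset_def act_mult\<close>)

lemma bij_betw_transporter_rcosets:
  assumes "x0 \<in> \<Omega>" and closed: "\<And>g x. g \<in> carrier G \<Longrightarrow> x \<in> \<Omega> \<Longrightarrow> act g x \<in> \<Omega>"
    and transitive: "\<And>x. x \<in> \<Omega> \<Longrightarrow> \<exists>g\<in>carrier G. act g x = x0"
  shows "bij_betw (\<lambda>x. {h \<in> carrier G. act h x = x0}) \<Omega> (rcosets {s \<in> carrier G. act s x0 = x0})"
proof (rule bij_betw_imageI)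
  show "inj_on (\<lambda>x. {h \<in> carrier G. act h x = x0}) \<Omega>"
  proof (rule inj_onI)
    fix x y assume "x \<in> \<Omega>" "{h \<in> carrier G. act h x = x0} = {h \<in> carrier G. act h y = x0}"
    moreover obtain g where "g \<in> carrier G" "act g x = x0" using transitive \<open>x \<in> \<Omega>\<close> by blast
    ultimately show "x = y" by (metis (mono_tags, lifting) act_inj mem_Collect_eq)
  qed
  show "(\<lambda>x. {h \<in> carrier G. act h x = x0}) ` \<Omega> = rcosets {s \<in> carrier G. act s x0 = x0}"
  proof (intro equalityI subsetI)
    fix C assume "C \<in> (\<lambda>x. {h \<in> carrier G. act h x = x0}) ` \<Omega>"
    then obtain x g where "x \<in> \<Omega>" "C = {h \<in> carrier G. act h x = x0}" "g \<in> carrier G" "act g x = x0"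
      using transitive by blast
    then show "C \<in> rcosets {s \<in> carrier G. act s x0 = x0}"
      using transporter_eq_rcos by (auto simp: RCOSETS_def)
  next
    fix C assume "C \<in> rcosets {s \<in> carrier G. act s x0 = x0}"
    then obtain g where g: "g \<in> carrier G" "C = {s \<in> carrier G. act s x0 = x0} #> g"
      by (auto simp: RCOSETS_def)
    then have "C = {h \<in> carrier G. act h (act (inv g) x0) = x0}"
      using transporter_eq_rcos[of g "act (inv g) x0" x0] by simp
    then show "C \<in> (\<lambda>x. {h \<in> carrier G. act h x = x0}) ` \<Omega>"
      using closed[OF inv_closed[OF g(1)] \<open>x0 \<in> \<Omega>\<close>] by blast
  qed
qed

lemma conj_set_stabiliser:
  assumes "g \<in> carrier G"
  shows "conj_set G {h \<in> carrier G. act h x = x} g = {h \<in> carrier G. act h (act (inv g) x) = act (inv g) x}"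
proof (intro equalityI subsetI)
  fix s assume s: "s \<in> {h \<in> carrier G. act h (act (inv g) x) = act (inv g) x}"
  then have "g \<otimes> s \<otimes> inv g \<in> {h \<in> carrier G. act h x = x}"
    using assms by (simp add: act_mult)
  moreover have "s = inv g \<otimes> (g \<otimes> s \<otimes> inv g) \<otimes> g"
    using assms s by (simp add: m_assoc flip: m_assoc[of "inv g" g s])
  ultimately show "s \<in> conj_set G {h \<in> carrier G. act h x = x} g"
    unfolding conj_set_def by blast
qed (use assms in \<open>auto simp: conj_set_def act_mult\<close>)

end

section \<open>Graphs and their automorphism groups\<close>

lemma auts_iff:
  "(f, g) \<in> auts V E I \<longleftrightarrow> f permutes V \<and> g permutes E \<and>
     (\<forall>v\<in>V. \<forall>e\<in>E. (v, e) \<in> I \<longleftrightarrow> (f v, g e) \<in> I)"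
  by (auto simp: auts_def permutes_imp_bij permutes_not_in intro: bij_imp_permutes)

lemma carrier_Aut_group [simp]: "carrier (Aut_group V E I) = auts V E I"
  by (simp add: Aut_group_def)

lemma one_Aut_group: "\<one>\<^bsub>Aut_group V E I\<^esub> = (id, id)"
  by (simp add: Aut_group_def)

lemma mult_Aut_group: "x \<otimes>\<^bsub>Aut_group V E I\<^esub> y = (fst x \<circ> fst y, snd x \<circ> snd y)"
  by (simp add: Aut_group_def split: prod.split)

lemma fst_one_Aut_group [simp]: "fst \<one>\<^bsub>Aut_group V E I\<^esub> = id"
  and snd_one_Aut_group [simp]: "snd \<one>\<^bsub>Aut_group V E I\<^esub> = id"
  and fst_mult_Aut_group [simp]: "fst (x \<otimes>\<^bsub>Aut_group V E I\<^esub> y) = fst x \<circ> fst y"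
  and snd_mult_Aut_group [simp]: "snd (x \<otimes>\<^bsub>Aut_group V E I\<^esub> y) = snd x \<circ> snd y"
  by (simp_all add: one_Aut_group mult_Aut_group)

lemma group_Aut_group: "group (Aut_group V E I)"
proof (rule groupI)
  fix x y assume "x \<in> carrier (Aut_group V E I)" "y \<in> carrier (Aut_group V E I)"
  then obtain f g f' g' where xy: "x = (f, g)" "y = (f', g')"
    and x: "f permutes V" "g permutes E" "\<forall>v\<in>V. \<forall>e\<in>E. (v, e) \<in> I \<longleftrightarrow> (f v, g e) \<in> I"
    and y: "f' permutes V" "g' permutes E" "\<forall>v\<in>V. \<forall>e\<in>E. (v, e) \<in> I \<longleftrightarrow> (f' v, g' e) \<in> I"
    by (cases x, cases y) (simp add: auts_iff)
  have "\<forall>v\<in>V. \<forall>e\<in>E. (v, e) \<in> I \<longleftrightarrow> (f (f' v), g (g' e)) \<in> I"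
    using x(3) y(3) permutes_in_image[OF y(1)] permutes_in_image[OF y(2)] by blast
  then show "x \<otimes>\<^bsub>Aut_group V E I\<^esub> y \<in> carrier (Aut_group V E I)"
    using x y by (simp add: xy mult_Aut_group auts_iff permutes_compose)
next
  fix x assume "x \<in> carrier (Aut_group V E I)"
  then obtain f g where x: "x = (f, g)" and f: "f permutes V" and g: "g permutes E"
    and inc: "\<forall>v\<in>V. \<forall>e\<in>E. (v, e) \<in> I \<longleftrightarrow> (f v, g e) \<in> I"
    by (cases x) (simp add: auts_iff)
  have "\<forall>v\<in>V. \<forall>e\<in>E. (v, e) \<in> I \<longleftrightarrow> (Hilbert_Choice.inv f v, Hilbert_Choice.inv g e) \<in> I"
    using inc permutes_in_image[OF permutes_inv[OF f]] permutes_in_image[OF permutes_inv[OF g]]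
    by (metis permutes_inverses(1)[OF f] permutes_inverses(1)[OF g])
  then have "(Hilbert_Choice.inv f, Hilbert_Choice.inv g) \<in> carrier (Aut_group V E I)"
    using f g by (simp add: auts_iff permutes_inv)
  moreover have "(Hilbert_Choice.inv f, Hilbert_Choice.inv g) \<otimes>\<^bsub>Aut_group V E I\<^esub> x = \<one>\<^bsub>Aut_group V E I\<^esub>"
    using f g by (simp add: x one_Aut_group mult_Aut_group permutes_inv_o)
  ultimately show "\<exists>y\<in>carrier (Aut_group V E I). y \<otimes>\<^bsub>Aut_group V E I\<^esub> x = \<one>\<^bsub>Aut_group V E I\<^esub>"
    by blast
next
  show "\<one>\<^bsub>Aut_group V E I\<^esub> \<in> carrier (Aut_group V E I)"
    by (simp add: one_Aut_group auts_iff permutes_id)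
next
  fix x y z show "x \<otimes>\<^bsub>Aut_group V E I\<^esub> y \<otimes>\<^bsub>Aut_group V E I\<^esub> z = x \<otimes>\<^bsub>Aut_group V E I\<^esub> (y \<otimes>\<^bsub>Aut_group V E I\<^esub> z)"
    by (simp add: mult_Aut_group comp_assoc)
qed (simp add: one_Aut_group mult_Aut_group)

lemma graph_ends_of_arc:
  assumes "graph V E I" "(u, e) \<in> I"
  obtains w where "w \<noteq> u" "{v. (v, e) \<in> I} = {u, w}"
proof -
  have "card {v. (v, e) \<in> I} = 2" using assms by (auto simp: graph_def)
  then obtain a b where "a \<noteq> b" "{v. (v, e) \<in> I} = {a, b}" by (auto simp: card_2_iff)
  moreover have "u \<in> {a, b}" using assms(2) \<open>{v. (v, e) \<in> I} = {a, b}\<close> by blast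
  ultimately show ?thesis using that by (metis insert_commute insertE singletonD)
qed

lemma graph_other_end_unique:
  assumes "graph V E I" "(u, e) \<in> I" "(w, e) \<in> I" "(w', e) \<in> I" "w \<noteq> u" "w' \<noteq> u"
  shows "w = w'"
proof -
  obtain v where "{x. (x, e) \<in> I} = {u, v}" using graph_ends_of_arc[OF assms(1,2)] .
  then show ?thesis using assms(3-6) by blast
qed

lemma graph_edge_has_end:
  assumes "graph V E I" "e \<in> E"
  obtains v where "(v, e) \<in> I"
proof -
  have "card {v. (v, e) \<in> I} = 2" using assms by (simp add: graph_def)
  then obtain x y where "{v. (v, e) \<in> I} = {x, y}" by (auto simp: card_2_iff)
  then show ?thesis using that by blast
qed

lemma edges_at_eq_UN_edges_between:
  assumes "graph V E I"
  shows "edges_at I u = (\<Union>v\<in>neighbours V I u. edges_between I u v)"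
proof (intro equalityI subsetI)
  fix e assume e: "e \<in> edges_at I u"
  then have "(u, e) \<in> I" by (simp add: edges_at_def)
  then obtain w where "w \<noteq> u" "{v. (v, e) \<in> I} = {u, w}"
    by (rule graph_ends_of_arc[OF assms])
  then have "w \<noteq> u" "(w, e) \<in> I" by blast+
  moreover have "w \<in> V" using assms \<open>(w, e) \<in> I\<close> by (auto simp: graph_def)
  ultimately have "w \<in> neighbours V I u" "e \<in> edges_between I u w"
    using e by (auto simp: neighbours_def adjacent_def edges_between_def edges_at_def)
  then show "e \<in> (\<Union>v\<in>neighbours V I u. edges_between I u v)" by blast
qed (auto simp: edges_between_def edges_at_def)

lemma finite_neighbours:
  assumes "graph V E I" "finite (edges_at I u)"
  shows "finite (neighbours V I u)"
proof -
  have "finite {v. (v, e) \<in> I}" if "e \<in> edges_at I u" for e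
  proof -
    have "(u, e) \<in> I" using that by (simp add: edges_at_def)
    then obtain w where "{v. (v, e) \<in> I} = {u, w}"
      by (rule graph_ends_of_arc[OF assms(1)])
    then show ?thesis by simp
  qed
  then have "finite (\<Union>e\<in>edges_at I u. {v. (v, e) \<in> I})" using assms(2) by (intro finite_UN_I)
  moreover have "neighbours V I u \<subseteq> (\<Union>e\<in>edges_at I u. {v. (v, e) \<in> I})"
    by (auto simp: neighbours_def adjacent_def edges_at_def)
  ultimately show ?thesis by (rule finite_subset[rotated])
qed

lemma card_edges_at:
  assumes "graph V E I" "u \<in> V" "finite (edges_at I u)"
    and "card (neighbours V I u) = k"
    and "\<forall>v\<in>V. adjacent I u v \<longrightarrow> card (edges_between I u v) = lam"
  shows "card (edges_at I u) = k * lam"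
proof -
  have "finite (edges_between I u v)" for v
    using assms(3) by (rule finite_subset[rotated]) (auto simp: edges_between_def edges_at_def)
  moreover have "edges_between I u v \<inter> edges_between I u w = {}"
    if "v \<in> neighbours V I u" "w \<in> neighbours V I u" "v \<noteq> w" for v w
    using that graph_other_end_unique[OF assms(1), of u _ v w]
    by (auto simp: edges_between_def neighbours_def adjacent_def)
  ultimately have "card (edges_at I u) = (\<Sum>v\<in>neighbours V I u. card (edges_between I u v))"
    unfolding edges_at_eq_UN_edges_between[OF assms(1)]
    using finite_neighbours[OF assms(1,3)] by (intro card_UN_disjoint) auto
  also have "\<dots> = k * lam"
    using assms(4,5) by (simp add: neighbours_def)
  finally show ?thesis .
qed

section \<open>Vertex-rotary graphs\<close>

locale vertex_rotary_graph =
  fixes V :: "'v set" and E :: "'e set" and I :: "('v \<times> 'e) set"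
    and G :: "(('v \<Rightarrow> 'v) \<times> ('e \<Rightarrow> 'e)) set"
  assumes graph: "graph V E I" and connected: "connected_graph V I"
    and subgroup: "subgroup G (Aut_group V E I)" and rotary: "vertex_rotary V E I G"
begin

abbreviation A :: "(('v \<Rightarrow> 'v) \<times> ('e \<Rightarrow> 'e)) monoid" where
  "A \<equiv> (Aut_group V E I)\<lparr>carrier := G\<rparr>"

sublocale A: group A
  rewrites "carrier A = G"
  by (simp_all add: subgroup.subgroup_is_group[OF subgroup group_Aut_group])

sublocale vertex_action: left_action A fst
  rewrites "carrier A = G"
  by unfold_locales simp_all

sublocale edge_action: left_action A snd
  rewrites "carrier A = G"
  by unfold_locales simp_all

lemma subgroup_vstab: "subgroup (vstab G u) A"
  unfolding vstab_def by (rule vertex_action.stabiliser_subgroup)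

lemma subgroup_estab: "subgroup (estab G e) A"
  unfolding estab_def by (rule edge_action.stabiliser_subgroup)

lemma incidence_iff:
  assumes "g \<in> G"
  shows "(v, e) \<in> I \<longleftrightarrow> (fst g v, snd g e) \<in> I"
proof -
  obtain f h where g: "g = (f, h)" and f: "f permutes V" and h: "h permutes E"
    and inc: "\<forall>v\<in>V. \<forall>e\<in>E. (v, e) \<in> I \<longleftrightarrow> (f v, h e) \<in> I"
    using subgroup.subset[OF subgroup] assms by (cases g) (auto simp: auts_iff)
  have "I \<subseteq> V \<times> E" using graph by (simp add: graph_def)
  then show ?thesis
    using inc permutes_in_image[OF f, of v] permutes_in_image[OF h, of e] by (auto simp: g)
qed

lemma vertex_closed: "g \<in> G \<Longrightarrow> v \<in> V \<Longrightarrow> fst g v \<in> V"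
  using subgroup.subset[OF subgroup] by (cases g) (auto simp: auts_iff permutes_in_image)

lemma edge_closed: "g \<in> G \<Longrightarrow> e \<in> E \<Longrightarrow> snd g e \<in> E"
  using subgroup.subset[OF subgroup] by (cases g) (auto simp: auts_iff permutes_in_image)

lemma other_end_image:
  assumes g: "g \<in> G" and "(u, e) \<in> I" "(w, e) \<in> I" "w \<noteq> u"
    and "(x, snd g e) \<in> I" "x \<noteq> fst g u"
  shows "fst g w = x"
proof -
  have "(fst g u, snd g e) \<in> I" "(fst g w, snd g e) \<in> I"
    using incidence_iff[OF g] assms(2,3) by blast+
  moreover have "fst g w \<noteq> fst g u" using vertex_action.act_inj[OF g] assms(4) by blast
  ultimately show ?thesis using graph_other_end_unique[OF graph] assms(5,6) by blast
qed

lemma transitive_on_arcs: "(v, e) \<in> I \<Longrightarrow> (w, e') \<in> I \<Longrightarrow> \<exists>g\<in>G. fst g v = w \<and> snd g e = e'"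
proof -
  assume "(v, e) \<in> I" "(w, e') \<in> I"
  then obtain g where "g \<in> G" "arc_act g (v, e) = (w, e')"
    using rotary unfolding vertex_rotary_def arc_transitive_def arcs_def by blast
  then show ?thesis by (auto simp: arc_act_def)
qed

lemma vstab_transitive_on_edges_at:
  "u \<in> V \<Longrightarrow> e \<in> edges_at I u \<Longrightarrow> e' \<in> edges_at I u \<Longrightarrow> \<exists>g\<in>vstab G u. snd g e = e'"
  using rotary by (simp add: vertex_rotary_def)

text \<open>The group induced by the stabiliser of u on the edges at u is cyclic, hence abelian, and a
  transitive abelian permutation group is regular.\<close>
lemma vstab_fixing_edge_fixes_edges_at:
  assumes g: "g \<in> vstab G u" and u: "u \<in> V"
    and e: "e \<in> edges_at I u" "snd g e = e" and e': "e' \<in> edges_at I u"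
  shows "snd g e' = e'"
proof -
  let ?pow = "\<lambda>c n. c [^]\<^bsub>Aut_group V E I\<^esub> (n::int)"
  obtain c where c: "c \<in> vstab G u"
    and cyclic: "\<forall>g\<in>vstab G u. \<exists>n. \<forall>e\<in>edges_at I u. snd g e = snd (?pow c n) e"
    using rotary u by (auto simp: vertex_rotary_def)
  obtain h where h: "h \<in> vstab G u" "snd h e = e'"
    using vstab_transitive_on_edges_at[OF u e(1) e'] by blast
  obtain n where n: "\<forall>e\<in>edges_at I u. snd g e = snd (?pow c n) e" using cyclic g by blast
  obtain m where m: "\<forall>e\<in>edges_at I u. snd h e = snd (?pow c m) e" using cyclic h(1) by blast
  have "c \<in> carrier (Aut_group V E I)" using c subgroup.subset[OF subgroup] by (auto simp: vstab_def)
  then have "?pow c n \<otimes>\<^bsub>Aut_group V E I\<^esub> ?pow c m = ?pow c m \<otimes>\<^bsub>Aut_group V E I\<^esub> ?pow c n"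
    using group.int_pow_mult[OF group_Aut_group] by (metis add.commute)
  then have commute: "snd (?pow c n) (snd (?pow c m) e) = snd (?pow c m) (snd (?pow c n) e)"
    by (metis comp_apply snd_mult_Aut_group)
  have "snd g e' = snd (?pow c n) (snd (?pow c m) e)" using n m h e e' by simp
  also have "\<dots> = snd (?pow c m) (snd (?pow c n) e)" by (rule commute)
  also have "\<dots> = e'" using n m h e by simp
  finally show ?thesis .
qed

lemma arc_stabiliser_fixes_vertex:
  assumes g: "g \<in> G" and "(u, e) \<in> I" "fst g u = u" "snd g e = e" and "v \<in> V"
  shows "fst g v = v \<and> (\<forall>e'\<in>edges_at I v. snd g e' = e')"
proof -
  have "u \<in> V" using assms(2) graph by (auto simp: graph_def)
  then have "(u, v) \<in> {(x, y). adjacent I x y}\<^sup>*"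
    using connected \<open>v \<in> V\<close> by (simp add: connected_graph_def)
  then show ?thesis
  proof (induction rule: rtrancl_induct)
    case base
    show ?case
      using vstab_fixing_edge_fixes_edges_at \<open>u \<in> V\<close> assms by (auto simp: vstab_def edges_at_def)
  next
    case (step v w)
    then obtain e' where e': "(v, e') \<in> I" "(w, e') \<in> I" and "v \<noteq> w"
      by (auto simp: adjacent_def)
    have ge': "snd g e' = e'" using step.IH e'(1) by (simp add: edges_at_def)
    have gw: "fst g w = w"
      using other_end_image[OF g e', of w] e'(2) step.IH ge' \<open>v \<noteq> w\<close> by auto
    have "w \<in> V" using e'(2) graph by (auto simp: graph_def)
    then show ?case
      using vstab_fixing_edge_fixes_edges_at[of g w e'] g gw e'(2) ge' by (auto simp: vstab_def edges_at_def)
  qed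
qed

lemma arc_stabiliser_trivial:
  assumes g: "g \<in> G" and "(u, e) \<in> I" "fst g u = u" "snd g e = e"
  shows "g = \<one>\<^bsub>A\<^esub>"
proof -
  note fixed = arc_stabiliser_fixes_vertex[OF assms]
  obtain f h where g_eq: "g = (f, h)" and f: "f permutes V" and h: "h permutes E"
    using g subgroup.subset[OF subgroup] by (cases g) (auto simp: auts_iff)
  have "f v = v" for v
    using fixed[of v] permutes_not_in[OF f, of v] by (cases "v \<in> V") (auto simp: g_eq)
  moreover have "h e' = e'" for e'
  proof (cases "e' \<in> E")
    case True
    then obtain v where "(v, e') \<in> I" using graph_edge_has_end[OF graph] by blast
    moreover from this have "v \<in> V" using graph by (auto simp: graph_def)
    ultimately show ?thesis using fixed[of v] by (simp add: g_eq edges_at_def)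
  qed (use permutes_not_in[OF h] in simp)
  ultimately show ?thesis by (simp add: g_eq fun_eq_iff one_Aut_group)
qed

lemma eq_if_agree_on_arc:
  assumes g: "g \<in> G" and h: "h \<in> G" and "(u, e) \<in> I" "fst g u = fst h u" "snd g e = snd h e"
  shows "g = h"
proof -
  have "inv\<^bsub>A\<^esub> h \<otimes>\<^bsub>A\<^esub> g = \<one>\<^bsub>A\<^esub>"
  proof (rule arc_stabiliser_trivial)
    show "inv\<^bsub>A\<^esub> h \<otimes>\<^bsub>A\<^esub> g \<in> G" using A.m_closed[OF A.inv_closed] g h by simp
    show "fst (inv\<^bsub>A\<^esub> h \<otimes>\<^bsub>A\<^esub> g) u = u"
      using assms(4) vertex_action.act_inv_act[OF h] by simp
    show "snd (inv\<^bsub>A\<^esub> h \<otimes>\<^bsub>A\<^esub> g) e = e"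
      using assms(5) edge_action.act_inv_act[OF h] by simp
  qed (rule assms(3))
  then show ?thesis
    using g h by (metis A.inv_closed A.inv_equality A.inv_inv)
qed

lemma arc_regular: "arc_regular I G"
  unfolding arc_regular_def
proof (intro ballI)
  fix d d' assume "d \<in> arcs I" "d' \<in> arcs I"
  then obtain g where g: "g \<in> G" "arc_act g d = d'"
    using rotary unfolding vertex_rotary_def arc_transitive_def by blast
  moreover have "g' = g" if "g' \<in> G" "arc_act g' d = d'" for g'
  proof (rule eq_if_agree_on_arc[OF that(1) g(1)])
    show "(fst d, snd d) \<in> I" using \<open>d \<in> arcs I\<close> by (simp add: arcs_def)
  qed (use that(2) g(2) in \<open>auto simp: arc_act_def prod_eq_iff\<close>)
  ultimately show "\<exists>!g. g \<in> G \<and> arc_act g d = d'" by blast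
qed

lemma subgroup_eq_if_transitive:
  assumes K: "subgroup K A" "vstab G u \<subseteq> K" and u: "u \<in> V"
    and transitive: "\<And>v. v \<in> V \<Longrightarrow> \<exists>k\<in>K. fst k u = v"
  shows "K = G"
proof -
  have "g \<in> K" if g: "g \<in> G" for g
  proof -
    obtain k where k: "k \<in> K" "fst k u = fst g u" using transitive vertex_closed[OF g u] by blast
    have kG: "k \<in> G" using k(1) subgroup.subset[OF K(1)] by auto
    define h where "h = inv\<^bsub>A\<^esub> k \<otimes>\<^bsub>A\<^esub> g"
    have h: "h \<in> vstab G u"
      using A.m_closed[OF A.inv_closed[OF kG] g] vertex_action.act_inv_act[OF kG] k(2)[symmetric]
      by (simp add: h_def vstab_def)
    then have "g = k \<otimes>\<^bsub>A\<^esub> h"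
      using A.inv_solve_left'[OF _ kG g, of h] by (simp add: h_def vstab_def)
    then show "g \<in> K" using K k(1) h by (blast intro: subgroup.m_closed)
  qed
  then show ?thesis using subgroup.subset[OF K(1)] by auto
qed

end

section \<open>The stabilisers of an arc's vertex and edge\<close>

locale rotary_arc = vertex_rotary_graph V E I G
  for V :: "'v set" and E :: "'e set" and I G +
  fixes \<alpha> \<beta> :: 'v and e :: 'e
  assumes arc_\<alpha>: "(\<alpha>, e) \<in> I" and arc_\<beta>: "(\<beta>, e) \<in> I" and distinct_ends: "\<alpha> \<noteq> \<beta>"
begin

abbreviation H where "H \<equiv> vstab G \<alpha>"
abbreviation J where "J \<equiv> estab G e"

lemma \<alpha>_in_V: "\<alpha> \<in> V"
  using arc_\<alpha> graph by (auto simp: graph_def)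

lemma ex_vstab_map_edge: "(\<alpha>, e') \<in> I \<Longrightarrow> \<exists>h\<in>H. snd h e = e'"
  using vstab_transitive_on_edges_at[OF \<alpha>_in_V, of e e'] arc_\<alpha> by (simp add: edges_at_def)

lemma bij_betw_vstab_edges_at: "bij_betw (\<lambda>h. snd h e) H (edges_at I \<alpha>)"
proof (rule bij_betw_imageI)
  show "inj_on (\<lambda>h. snd h e) H"
  proof (rule inj_onI)
    fix g h assume "g \<in> H" "h \<in> H" "snd g e = snd h e"
    then show "g = h" using eq_if_agree_on_arc[OF _ _ arc_\<alpha>, of g h] by (simp add: vstab_def)
  qed
  show "(\<lambda>h. snd h e) ` H = edges_at I \<alpha>"
  proof (intro equalityI subsetI)
    fix e' assume "e' \<in> (\<lambda>h. snd h e) ` H"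
    then obtain h where "h \<in> G" "fst h \<alpha> = \<alpha>" "e' = snd h e" by (auto simp: vstab_def)
    then show "e' \<in> edges_at I \<alpha>"
      using incidence_iff[of h \<alpha> e] arc_\<alpha> by (simp add: edges_at_def)
  next
    fix e' assume "e' \<in> edges_at I \<alpha>"
    then show "e' \<in> (\<lambda>h. snd h e) ` H" using ex_vstab_map_edge by (auto simp: edges_at_def)
  qed
qed

lemma vstab_cyclic: "\<exists>a\<in>H. H = generate A {a}"
proof -
  obtain c where c: "c \<in> H"
    and cyclic: "\<forall>g\<in>H. \<exists>n::int. \<forall>e\<in>edges_at I \<alpha>. snd g e = snd (c [^]\<^bsub>Aut_group V E I\<^esub> n) e"
    using rotary \<alpha>_in_V by (auto simp: vertex_rotary_def)
  have cG: "c \<in> G" using c by (simp add: vstab_def)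
  have "H \<subseteq> generate A {c}"
  proof
    fix g assume g: "g \<in> H"
    then obtain n :: int where "\<forall>e\<in>edges_at I \<alpha>. snd g e = snd (c [^]\<^bsub>Aut_group V E I\<^esub> n) e"
      using cyclic by blast
    then have n: "\<forall>e\<in>edges_at I \<alpha>. snd g e = snd (c [^]\<^bsub>A\<^esub> n) e"
      using group.int_pow_consistent[OF group_Aut_group subgroup cG] by simp
    have "c [^]\<^bsub>A\<^esub> n \<in> H" using A.subgroup_int_pow_closed[OF subgroup_vstab c] .
    then have "g = c [^]\<^bsub>A\<^esub> n"
      using g n arc_\<alpha> by (intro eq_if_agree_on_arc[OF _ _ arc_\<alpha>]) (auto simp: vstab_def edges_at_def)
    then show "g \<in> generate A {c}" using A.generate_pow[OF cG] by auto
  qed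
  moreover have "generate A {c} \<subseteq> H"
    using A.generate_subgroup_incl[OF _ subgroup_vstab] c by simp
  ultimately show ?thesis using c by blast
qed

lemma vstab_inter_estab: "H \<inter> J = {\<one>\<^bsub>A\<^esub>}"
proof -
  have "\<one>\<^bsub>A\<^esub> \<in> H \<inter> J" using A.one_closed by (simp add: vstab_def estab_def)
  moreover have "g = \<one>\<^bsub>A\<^esub>" if "g \<in> H \<inter> J" for g
    using that arc_stabiliser_trivial[OF _ arc_\<alpha>, of g] by (simp add: vstab_def estab_def)
  ultimately show ?thesis by blast
qed

lemma bij_betw_vstab_inter_edges_between:
  "bij_betw (\<lambda>h. snd h e) (H \<inter> vstab G \<beta>) (edges_between I \<alpha> \<beta>)"
proof (rule bij_betw_imageI)
  show "inj_on (\<lambda>h. snd h e) (H \<inter> vstab G \<beta>)"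
    using bij_betw_vstab_edges_at by (auto simp: bij_betw_def intro: inj_on_subset)
  show "(\<lambda>h. snd h e) ` (H \<inter> vstab G \<beta>) = edges_between I \<alpha> \<beta>"
  proof (intro equalityI subsetI)
    fix e' assume "e' \<in> (\<lambda>h. snd h e) ` (H \<inter> vstab G \<beta>)"
    then obtain h where "h \<in> G" "fst h \<alpha> = \<alpha>" "fst h \<beta> = \<beta>" "e' = snd h e"
      by (auto simp: vstab_def)
    then show "e' \<in> edges_between I \<alpha> \<beta>"
      using incidence_iff[of h \<alpha> e] incidence_iff[of h \<beta> e] arc_\<alpha> arc_\<beta>
      by (simp add: edges_between_def)
  next
    fix e' assume e': "e' \<in> edges_between I \<alpha> \<beta>"
    then have "(\<alpha>, e') \<in> I" by (simp add: edges_between_def)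
    then obtain h where h: "h \<in> H" "snd h e = e'" using ex_vstab_map_edge by blast
    then have hG: "h \<in> G" "fst h \<alpha> = \<alpha>" by (auto simp: vstab_def)
    have "fst h \<beta> = \<beta>"
      using other_end_image[OF hG(1) arc_\<alpha> arc_\<beta>, of \<beta>] e' h(2) hG(2) distinct_ends
      by (auto simp: edges_between_def)
    then show "e' \<in> (\<lambda>h. snd h e) ` (H \<inter> vstab G \<beta>)" using h hG by (auto simp: vstab_def)
  qed
qed

lemma vertex_transitive: "v \<in> V \<Longrightarrow> \<exists>g\<in>G. fst g v = \<alpha>"
proof -
  assume "v \<in> V"
  then have "(v, \<alpha>) \<in> {(x, y). adjacent I x y}\<^sup>*"
    using connected \<alpha>_in_V by (simp add: connected_graph_def)
  then have "\<exists>e'. (v, e') \<in> I"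
    by (cases rule: converse_rtranclE) (use arc_\<alpha> in \<open>auto simp: adjacent_def\<close>)
  then show ?thesis using transitive_on_arcs arc_\<alpha> by blast
qed

lemma edge_transitive: "e' \<in> E \<Longrightarrow> \<exists>g\<in>G. snd g e' = e"
  using graph_edge_has_end[OF graph] transitive_on_arcs arc_\<alpha> by metis

lemma incident_iff_in_set_mult:
  assumes x: "x \<in> G" "fst x v = \<alpha>" and y: "y \<in> G" "snd y e' = e"
  shows "(v, e') \<in> I \<longleftrightarrow> y \<otimes>\<^bsub>A\<^esub> inv\<^bsub>A\<^esub> x \<in> J <#>\<^bsub>A\<^esub> H"
proof
  assume "(v, e') \<in> I"
  then have "(\<alpha>, snd x e') \<in> I" using incidence_iff[OF x(1), of v e'] x(2) by simp
  then obtain h where h: "h \<in> H" "snd h e = snd x e'"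
    using ex_vstab_map_edge by blast
  then have hG: "h \<in> G" by (simp add: vstab_def)
  have "y \<otimes>\<^bsub>A\<^esub> inv\<^bsub>A\<^esub> x \<otimes>\<^bsub>A\<^esub> h \<in> J"
    using A.m_closed[OF A.m_closed[OF y(1) A.inv_closed[OF x(1)]] hG] h(2) y(2)
      edge_action.act_inv_act[OF x(1)] by (simp add: estab_def)
  moreover have "y \<otimes>\<^bsub>A\<^esub> inv\<^bsub>A\<^esub> x = (y \<otimes>\<^bsub>A\<^esub> inv\<^bsub>A\<^esub> x \<otimes>\<^bsub>A\<^esub> h) \<otimes>\<^bsub>A\<^esub> inv\<^bsub>A\<^esub> h"
    using x y hG by (metis A.inv_closed A.m_assoc A.m_closed A.r_inv A.r_one)
  moreover have "inv\<^bsub>A\<^esub> h \<in> H" using subgroup.m_inv_closed[OF subgroup_vstab h(1)] .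
  ultimately show "y \<otimes>\<^bsub>A\<^esub> inv\<^bsub>A\<^esub> x \<in> J <#>\<^bsub>A\<^esub> H" unfolding set_mult_def by blast
next
  assume "y \<otimes>\<^bsub>A\<^esub> inv\<^bsub>A\<^esub> x \<in> J <#>\<^bsub>A\<^esub> H"
  then obtain j h where j: "j \<in> G" "snd j e = e" and h: "h \<in> G" "fst h \<alpha> = \<alpha>"
    and yx: "y \<otimes>\<^bsub>A\<^esub> inv\<^bsub>A\<^esub> x = j \<otimes>\<^bsub>A\<^esub> h"
    unfolding set_mult_def by (auto simp: estab_def vstab_def)
  have "snd j (snd h (snd x e')) = snd j e"
    using arg_cong[OF yx, of "\<lambda>g. snd g (snd x e')"] edge_action.act_inv_act[OF x(1)] y(2) j(2) by simp
  then have "snd h (snd x e') = e" using edge_action.act_inj[OF j(1)] by blast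
  then have "(\<alpha>, snd x e') \<in> I" using incidence_iff[OF h(1), of \<alpha> "snd x e'"] h(2) arc_\<alpha> by simp
  then show "(v, e') \<in> I" using incidence_iff[OF x(1), of v e'] x(2) by simp
qed

lemma coset_graph_isomorphic: "graph_isomorphic V E I (cos_V A H) (cos_E A J) (cos_I A H J)"
proof -
  let ?\<phi> = "\<lambda>v. {g \<in> G. fst g v = \<alpha>}" and ?\<psi> = "\<lambda>e'. {g \<in> G. snd g e' = e}"
  have "bij_betw ?\<phi> V (cos_V A H)"
    unfolding cos_V_def vstab_def
    using vertex_action.bij_betw_transporter_rcosets[OF \<alpha>_in_V] vertex_closed vertex_transitive by blast
  moreover have "bij_betw ?\<psi> E (cos_E A J)"
    unfolding cos_E_def estab_def
    using edge_action.bij_betw_transporter_rcosets[of e E] edge_closed edge_transitive graph arc_\<alpha>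
    by (auto simp: graph_def)
  moreover have "(v, e') \<in> I \<longleftrightarrow> (?\<phi> v, ?\<psi> e') \<in> cos_I A H J" if "v \<in> V" "e' \<in> E" for v e'
  proof
    obtain x where x: "x \<in> G" "fst x v = \<alpha>" using vertex_transitive \<open>v \<in> V\<close> by blast
    obtain y where y: "y \<in> G" "snd y e' = e" using edge_transitive \<open>e' \<in> E\<close> by blast
    assume "(v, e') \<in> I"
    then have "y \<otimes>\<^bsub>A\<^esub> inv\<^bsub>A\<^esub> x \<in> J <#>\<^bsub>A\<^esub> H" using incident_iff_in_set_mult[OF x y] by blast
    moreover have "?\<phi> v = H #>\<^bsub>A\<^esub> x" "?\<psi> e' = J #>\<^bsub>A\<^esub> y"
      using vertex_action.transporter_eq_rcos[OF x] edge_action.transporter_eq_rcos[OF y]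
      by (simp_all add: vstab_def estab_def)
    moreover have "carrier A = G" by simp
    ultimately show "(?\<phi> v, ?\<psi> e') \<in> cos_I A H J" using x(1) y(1) unfolding cos_I_def by blast
  next
    assume "(?\<phi> v, ?\<psi> e') \<in> cos_I A H J"
    then obtain x y where xy: "x \<in> G" "y \<in> G" "?\<phi> v = H #>\<^bsub>A\<^esub> x" "?\<psi> e' = J #>\<^bsub>A\<^esub> y"
      and "y \<otimes>\<^bsub>A\<^esub> inv\<^bsub>A\<^esub> x \<in> J <#>\<^bsub>A\<^esub> H"
      unfolding cos_I_def by auto
    moreover have "x \<in> ?\<phi> v" using A.rcos_self[OF xy(1) subgroup_vstab] xy(3) by simp
    moreover have "y \<in> ?\<psi> e'" using A.rcos_self[OF xy(2) subgroup_estab] xy(4) by simp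
    ultimately show "(v, e') \<in> I" using incident_iff_in_set_mult[of x v y e'] by blast
  qed
  ultimately show ?thesis unfolding graph_isomorphic_def by blast
qed

lemma swap_exists: "\<exists>z\<in>G. fst z \<alpha> = \<beta> \<and> snd z e = e"
  using transitive_on_arcs[OF arc_\<alpha> arc_\<beta>] .

context
  fixes z assumes swap: "z \<in> G" "fst z \<alpha> = \<beta>" "snd z e = e"
begin

lemma fst_swap_\<beta>: "fst z \<beta> = \<alpha>"
  using other_end_image[OF swap(1) arc_\<alpha> arc_\<beta>, of \<alpha>] swap arc_\<alpha> distinct_ends by auto

lemma estab_eq_swap: "J = {\<one>\<^bsub>A\<^esub>, z}"
proof (intro equalityI subsetI)
  fix g assume "g \<in> J"
  then have g: "g \<in> G" "snd g e = e" by (auto simp: estab_def)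
  then have "(fst g \<alpha>, e) \<in> I" using incidence_iff[OF g(1), of \<alpha> e] arc_\<alpha> by simp
  then have "fst g \<alpha> = \<alpha> \<or> fst g \<alpha> = \<beta>"
    using graph_other_end_unique[OF graph arc_\<alpha> _ arc_\<beta>] distinct_ends by blast
  then show "g \<in> {\<one>\<^bsub>A\<^esub>, z}"
    using arc_stabiliser_trivial[OF g(1) arc_\<alpha>] eq_if_agree_on_arc[OF g(1) swap(1) arc_\<alpha>] g swap
    by auto
qed (use A.one_closed swap in \<open>auto simp: estab_def\<close>)

lemma swap_ne_one: "z \<noteq> \<one>\<^bsub>A\<^esub>"
  using swap(2) distinct_ends by auto

lemma generate_swap: "generate A {z} = J"
proof
  show "generate A {z} \<subseteq> J"
    using A.generate_subgroup_incl[OF _ subgroup_estab] swap by (simp add: estab_def)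
  show "J \<subseteq> generate A {z}"
    using estab_eq_swap generate.one[of A "{z}"] generate.incl[of z "{z}" A] by auto
qed

lemma ord_swap: "A.ord z = 2"
  using A.generate_pow_card[OF swap(1)] generate_swap estab_eq_swap swap_ne_one by simp

lemma conj_set_vstab_swap: "conj_set A H z = vstab G \<beta>"
proof -
  have "fst (inv\<^bsub>A\<^esub> z) \<alpha> = \<beta>"
    using vertex_action.act_inv_act[OF swap(1), of \<beta>] fst_swap_\<beta> by simp
  then show ?thesis
    using vertex_action.conj_set_stabiliser[OF swap(1), of \<alpha>] by (simp add: vstab_def)
qed

lemma swap_notin_vstab: "z \<notin> H"
  using swap(2) distinct_ends by (simp add: vstab_def)

lemma estab_iso: "A\<lparr>carrier := J\<rparr> \<cong> integer_mod_group 2"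
  using A.generate_singleton_iso_integer_mod_group[OF swap(1)] ord_swap generate_swap by simp

text \<open>If k maps \<alpha> to v and e' joins v to w, choose h \<in> H with h e = k\<inverse> e'; then k h z maps \<alpha> to w.\<close>
lemma orbit_closed_under_adjacency:
  assumes K: "subgroup K A" "H \<subseteq> K" "z \<in> K"
    and k: "k \<in> K" and adj: "adjacent I (fst k \<alpha>) w"
  shows "\<exists>k'\<in>K. fst k' \<alpha> = w"
proof -
  have kG: "k \<in> G" using k subgroup.subset[OF K(1)] by auto
  obtain e' where e': "(fst k \<alpha>, e') \<in> I" "(w, e') \<in> I" and "fst k \<alpha> \<noteq> w"
    using adj by (auto simp: adjacent_def)
  let ?k' = "inv\<^bsub>A\<^esub> k"
  have k'G: "?k' \<in> G" using A.inv_closed[OF kG] .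
  have "(\<alpha>, snd ?k' e') \<in> I" using incidence_iff[OF k'G, of "fst k \<alpha>" e'] e'(1) kG by simp
  then obtain h where h: "h \<in> H" "snd h e = snd ?k' e'" using ex_vstab_map_edge by blast
  then have hG: "h \<in> G" "fst h \<alpha> = \<alpha>" by (auto simp: vstab_def)
  have "(fst ?k' w, snd ?k' e') \<in> I" using incidence_iff[OF k'G] e'(2) by blast
  moreover have "fst ?k' w \<noteq> \<alpha>"
    using vertex_action.act_inj[OF k'G, of w "fst k \<alpha>"] kG \<open>fst k \<alpha> \<noteq> w\<close> by auto
  ultimately have "fst h \<beta> = fst ?k' w"
    using other_end_image[OF hG(1) arc_\<alpha> arc_\<beta>] h(2) hG(2) distinct_ends by auto
  then have "fst (k \<otimes>\<^bsub>A\<^esub> h \<otimes>\<^bsub>A\<^esub> z) \<alpha> = w"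
    using swap(2) vertex_action.act_act_inv[OF kG] by simp
  moreover have "k \<otimes>\<^bsub>A\<^esub> h \<otimes>\<^bsub>A\<^esub> z \<in> K"
    using K h(1) k by (blast intro: subgroup.m_closed)
  ultimately show ?thesis by blast
qed

lemma subgroup_eq_if_contains_vstab_swap:
  assumes K: "subgroup K A" "H \<subseteq> K" "z \<in> K"
  shows "K = G"
proof (rule subgroup_eq_if_transitive[OF K(1,2) \<alpha>_in_V])
  fix v assume "v \<in> V"
  then have "(\<alpha>, v) \<in> {(x, y). adjacent I x y}\<^sup>*"
    using connected \<alpha>_in_V by (simp add: connected_graph_def)
  then show "\<exists>k\<in>K. fst k \<alpha> = v"
  proof (induction rule: rtrancl_induct)
    case base
    show ?case using subgroup.one_closed[OF K(1)] by force
  next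
    case (step v w)
    then show ?case using orbit_closed_under_adjacency[OF K] by auto
  qed
qed

context
  fixes a assumes generator: "a \<in> H" "H = generate A {a}"
begin

lemma generate_generator_swap: "generate A {a, z} = G"
proof (rule subgroup_eq_if_contains_vstab_swap)
  show "subgroup (generate A {a, z}) A"
    using A.generate_is_subgroup generator(1) swap(1) by (simp add: vstab_def)
  show "H \<subseteq> generate A {a, z}" using generator(2) A.mono_generate[of "{a}" "{a, z}"] by auto
qed (simp add: generate.incl)

lemma ord_generator: "A.ord a = card (edges_at I \<alpha>)"
  using A.generate_pow_card[of a] generator bij_betw_same_card[OF bij_betw_vstab_edges_at]
  by (simp add: vstab_def)

lemma conj_swap_notin_generate: "inv\<^bsub>A\<^esub> a \<otimes>\<^bsub>A\<^esub> z \<otimes>\<^bsub>A\<^esub> a \<notin> generate A {a}"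
  using A.conj_notin_subgroup[OF subgroup_vstab generator(1) swap(1) swap_notin_vstab] generator(2)
  by simp

context
  fixes k assumes finite_edges_at: "finite (edges_at I \<alpha>)"
    and edges_at_card: "card (edges_at I \<alpha>) = k * card (edges_between I \<alpha> \<beta>)"
begin

lemma valency_multiplicity_pos: "k > 0" "card (edges_between I \<alpha> \<beta>) > 0"
proof -
  have "e \<in> edges_at I \<alpha>" using arc_\<alpha> by (simp add: edges_at_def)
  then show "k > 0" "card (edges_between I \<alpha> \<beta>) > 0"
    using finite_edges_at edges_at_card card_gt_0_iff[of "edges_at I \<alpha>"] by auto
qed

lemma vstab_inter_conj_swap: "H \<inter> conj_set A H z = generate A {a [^]\<^bsub>A\<^esub> k}"
proof -
  let ?m = "card (edges_between I \<alpha> \<beta>)"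
  have "H \<inter> vstab G \<beta> = generate A {a [^]\<^bsub>A\<^esub> k}"
  proof (rule A.subgroup_of_cyclic_eq_generate_pow)
    show "a \<in> G" using generator(1) by (simp add: vstab_def)
    show "A.ord a = k * ?m" using ord_generator edges_at_card by simp
    show "subgroup (H \<inter> vstab G \<beta>) A"
      using A.subgroups_Inter_pair[OF subgroup_vstab subgroup_vstab] .
    show "H \<inter> vstab G \<beta> \<subseteq> generate A {a}" using generator(2) by blast
    show "card (H \<inter> vstab G \<beta>) = ?m"
      using bij_betw_same_card[OF bij_betw_vstab_inter_edges_between] .
  qed (use valency_multiplicity_pos in auto)
  then show ?thesis using conj_set_vstab_swap by simp
qed

lemma vstab_iso: "A\<lparr>carrier := H\<rparr> \<cong> integer_mod_group (k * card (edges_between I \<alpha> \<beta>))"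
  using A.generate_singleton_iso_integer_mod_group[of a] generator ord_generator edges_at_card
    valency_multiplicity_pos by (simp add: vstab_def)

lemma vstab_inter_conj_iso:
  "A\<lparr>carrier := H \<inter> conj_set A H z\<rparr> \<cong> integer_mod_group (card (edges_between I \<alpha> \<beta>))"
proof -
  have ak: "a [^]\<^bsub>A\<^esub> k \<in> G" using generator(1) by (simp add: vstab_def)
  have "A.ord (a [^]\<^bsub>A\<^esub> k) = card (edges_between I \<alpha> \<beta>)"
    using A.generate_pow_card[OF ak] vstab_inter_conj_swap conj_set_vstab_swap
      bij_betw_same_card[OF bij_betw_vstab_inter_edges_between] by simp
  then show ?thesis
    using A.generate_singleton_iso_integer_mod_group[OF ak] vstab_inter_conj_swap valency_multiplicity_pos(2) by simp
qed

end

end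

end

end

theorem lemma3p1:
  fixes V :: "'v set" and E :: "'e set" and I :: "('v \<times> 'e) set"
    and G :: "(('v \<Rightarrow> 'v) \<times> ('e \<Rightarrow> 'e)) set"
    and k lam :: nat and \<alpha> \<beta> :: 'v and e :: 'e
  assumes graph: "graph V E I"
    and conn: "connected_graph V I"
    and lf: "locally_finite V I"
    and nonempty: "E \<noteq> {}"
    and sub: "subgroup G (Aut_group V E I)"
    and rot: "vertex_rotary V E I G"
    and val: "\<forall>v\<in>V. card (neighbours V I v) = k"
    and mult: "\<forall>u\<in>V. \<forall>v\<in>V. adjacent I u v \<longrightarrow> card (edges_between I u v) = lam"
    and \<alpha>: "\<alpha> \<in> V" and \<beta>: "\<beta> \<in> V" and adj: "adjacent I \<alpha> \<beta>"
    and e: "e \<in> E" and inc: "(\<alpha>, e) \<in> I" "(\<beta>, e) \<in> I"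
  shows "let A = (Aut_group V E I)\<lparr>carrier := G\<rparr>; H = vstab G \<alpha>; J = estab G e in
     graph_isomorphic V E I (cos_V A H) (cos_E A J) (cos_I A H J) \<and>
     (\<exists>a z. a \<in> G \<and> z \<in> G \<and>
        generate A {a, z} = G \<and>
        H = generate A {a} \<and> A\<lparr>carrier := H\<rparr> \<cong> integer_mod_group (k * lam) \<and>
        H \<inter> conj_set A H z = generate A {a [^]\<^bsub>A\<^esub> k} \<and>
        A\<lparr>carrier := H \<inter> conj_set A H z\<rparr> \<cong> integer_mod_group lam \<and>
        J = generate A {z} \<and> A\<lparr>carrier := J\<rparr> \<cong> integer_mod_group 2 \<and>
        H \<inter> J = {\<one>\<^bsub>A\<^esub>} \<and>
        z \<notin> generate A {a} \<and> inv\<^bsub>A\<^esub> a \<otimes>\<^bsub>A\<^esub> z \<otimes>\<^bsub>A\<^esub> a \<notin> generate A {a} \<and>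
        rotary_pair A a z \<and>
        arc_regular I G)"
proof -
  interpret rotary_arc V E I G \<alpha> \<beta> e
    using graph conn sub rot inc adj
    unfolding rotary_arc_def vertex_rotary_graph_def rotary_arc_axioms_def adjacent_def by blast
  have fin: "finite (edges_at I \<alpha>)" using lf \<alpha> by (simp add: locally_finite_def)
  have between: "card (edges_between I \<alpha> \<beta>) = lam" using mult \<alpha> \<beta> adj by blast
  have "e \<in> edges_at I \<alpha>" using inc(1) by (simp add: edges_at_def)
  have card_at: "card (edges_at I \<alpha>) = k * card (edges_between I \<alpha> \<beta>)"
    using card_edges_at[OF graph \<alpha> fin] val mult \<alpha> between by blast
  obtain a where a: "a \<in> H" "H = generate A {a}" using vstab_cyclic by blast
  obtain z where z: "z \<in> G" "fst z \<alpha> = \<beta>" "snd z e = e" using swap_exists by blast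
  have HC: "H \<inter> conj_set A H z = generate A {a [^]\<^bsub>A\<^esub> k}"
    and iso: "A\<lparr>carrier := H\<rparr> \<cong> integer_mod_group (k * lam)"
      "A\<lparr>carrier := H \<inter> conj_set A H z\<rparr> \<cong> integer_mod_group lam"
    using vstab_inter_conj_swap[OF z a fin card_at] vstab_iso[OF z a fin card_at]
      vstab_inter_conj_iso[OF z a fin card_at] between by simp_all
  have generator: "a \<in> G" "A.ord a \<noteq> 0"
    using a(1) ord_generator[OF z a] fin \<open>e \<in> edges_at I \<alpha>\<close> by (auto simp: vstab_def)
  show ?thesis
    unfolding Let_def rotary_pair_def
    by (rule conjI[OF coset_graph_isomorphic], rule exI[of _ a], rule exI[of _ z], intro conjI)
      (use generator z(1) generate_generator_swap[OF z a] a(2) HC iso generate_swap[OF z] estab_iso[OF z]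
        vstab_inter_estab ord_swap[OF z] arc_regular swap_notin_vstab[OF z]
        conj_swap_notin_generate[OF z a] in simp_all)
qed

end
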